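(* Let $G$ be an 8.8.8 lattice on a closed hyperbolic surface, in which every non-contractible cycle is long (length greater than $8$). Let $u$ be any vertex and $e=\{u,w\}$ any edge at $u$. Then the output $G'$ of the super-plaquette algorithm applied to $(G,e)$ satisfies $L(G')=9$. Moreover, $L(G')\le L(H)$ for every lattice $H$ satisfying all of the following: - $H$ is a tri-valent, 3-face-colourable multigraph embedded on the same surface; - its vertex set is $V(G)\setminus\{u,w'\}$ for some neighbour $w'$ of $u$; - every edge of $H$ joins two vertices adjacent in $G$.
   Context: An 8.8.8 lattice is a tri-valent, 3-face-colourable tiling of a closed hyperbolic surface by octagons, with three octagons meeting at each vertex. In a 3-face-colourable tri-valent lattice, every edge borders two faces of different colours and is assigned the third colour. A face is identified with its set of boundary edges. The super-plaquette algorithm takes as input such a lattice $G$, a vertex $u$ and an edge $e=\{u,w\}$ of colour $D$. It proceeds as follows. 1. Let $S_1,S_2$ be the two faces containing $e$; these are the shrink faces. 2. Let the merge faces be all faces of colour $D$ that share an edge with $S_1$ or $S_2$. 3. For each shrink face $S$, of colour $P$, and each edge $f$ of colour $D$ on the boundary of $S$ that contains neither $u$ nor $w$, add a new parallel edge $f'$ of colour $T\notin\{D,P\}$, and a new face $\{f,f'\}$ of colour $P$. 4. Delete the shrink faces. 5. Add a new face of colour $D$ consisting of all new edges $f'$, together with all edges of merge faces that are not on a shrink face. 6. Delete the merge faces. 7. Delete $u$, $w$ and all edges lying on no face. $L(H)$ denotes the number of unordered pairs of vertices adjacent in $G$ but not adjacent in $H$. Pairs involving a vertex absent from $H$ also count.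 *)

theory Defs
  imports Main
begin

(* Vertices have type 'v, edges type 'e (abstract, so multigraphs are allowed),
   ends g is the 2-element set of endpoints of edge g, a face is identified with
   its set of boundary edges. *)

datatype colour = Col0 | Col1 | Col2

definition inc_edges :: "'e set \<Rightarrow> ('e \<Rightarrow> 'v set) \<Rightarrow> 'v \<Rightarrow> 'e set" where
  "inc_edges E ends v = {g \<in> E. v \<in> ends g}"

definition verts_of :: "('e \<Rightarrow> 'v set) \<Rightarrow> 'e set \<Rightarrow> 'v set" where
  "verts_of ends C = \<Union> (ends ` C)"

definition edge_conn :: "('e \<Rightarrow> 'v set) \<Rightarrow> 'e set \<Rightarrow> bool" where
  "edge_conn ends C = (\<forall>g\<in>C. \<forall>h\<in>C.
      (g, h) \<in> {(a, b). a \<in> C \<and> b \<in> C \<and> ends a \<inter> ends b \<noteq> {}}\<^sup>*)"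

definition is_cycle :: "('e \<Rightarrow> 'v set) \<Rightarrow> 'e set \<Rightarrow> bool" where
  "is_cycle ends C = (finite C \<and> C \<noteq> {} \<and>
      (\<forall>v \<in> verts_of ends C. card (inc_edges C ends v) = 2) \<and> edge_conn ends C)"

definition adj :: "'e set \<Rightarrow> ('e \<Rightarrow> 'v set) \<Rightarrow> 'v \<Rightarrow> 'v \<Rightarrow> bool" where
  "adj E ends x y = (\<exists>g\<in>E. ends g = {x, y})"

definition graph_conn :: "'v set \<Rightarrow> 'e set \<Rightarrow> ('e \<Rightarrow> 'v set) \<Rightarrow> bool" where
  "graph_conn V E ends = (\<forall>x\<in>V. \<forall>y\<in>V. (x, y) \<in> {(a, b). adj E ends a b}\<^sup>*)"

(* cellular embedding of a graph in a closed connected surface: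
   faces are simple cycles (disk faces), every edge lies on exactly two faces *)
definition cellular_map :: "'v set \<Rightarrow> 'e set \<Rightarrow> ('e \<Rightarrow> 'v set) \<Rightarrow> 'e set set \<Rightarrow> bool" where
  "cellular_map V E ends F = (finite V \<and> finite E \<and> finite F \<and> V \<noteq> {} \<and>
      (\<forall>g\<in>E. ends g \<subseteq> V \<and> card (ends g) = 2) \<and>
      (\<forall>f\<in>F. f \<subseteq> E \<and> is_cycle ends f) \<and>
      (\<forall>g\<in>E. card {f \<in> F. g \<in> f} = 2) \<and>
      graph_conn V E ends)"

definition trivalent :: "'v set \<Rightarrow> 'e set \<Rightarrow> ('e \<Rightarrow> 'v set) \<Rightarrow> bool" where
  "trivalent V E ends = (\<forall>v\<in>V. card (inc_edges E ends v) = 3)"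

definition proper_face_col :: "'e set set \<Rightarrow> ('e set \<Rightarrow> colour) \<Rightarrow> bool" where
  "proper_face_col F fc = (\<forall>f1\<in>F. \<forall>f2\<in>F. f1 \<noteq> f2 \<and> f1 \<inter> f2 \<noteq> {} \<longrightarrow> fc f1 \<noteq> fc f2)"

definition euler_char :: "'v set \<Rightarrow> 'e set \<Rightarrow> 'e set set \<Rightarrow> int" where
  "euler_char V E F = int (card V) - int (card E) + int (card F)"

(* the faces can be oriented coherently: o f g is the head of edge g when
   traversing face f; each face becomes a directed cycle and the two faces on
   an edge traverse it in opposite directions *)
definition orientable :: "('e \<Rightarrow> 'v set) \<Rightarrow> 'e set set \<Rightarrow> bool" where
  "orientable ends F = (\<exists>ori :: 'e set \<Rightarrow> 'e \<Rightarrow> 'v.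
      (\<forall>f\<in>F. \<forall>g\<in>f. ori f g \<in> ends g) \<and>
      (\<forall>f\<in>F. \<forall>x \<in> verts_of ends f. card {g \<in> f. ori f g = x} = 1) \<and>
      (\<forall>f1\<in>F. \<forall>f2\<in>F. \<forall>g. f1 \<noteq> f2 \<and> g \<in> f1 \<and> g \<in> f2 \<longrightarrow> ori f1 g \<noteq> ori f2 g))"

(* a simple cycle C is contractible iff it bounds a disk: a set S of faces
   whose mod-2 boundary is C and whose union has Euler characteristic 1 *)
definition contractible :: "('e \<Rightarrow> 'v set) \<Rightarrow> 'e set set \<Rightarrow> 'e set \<Rightarrow> bool" where
  "contractible ends F C = (\<exists>S \<subseteq> F.
      {g. odd (card {f \<in> S. g \<in> f})} = C \<and>
      euler_char (verts_of ends (\<Union>S)) (\<Union>S) S = 1)"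

definition long_noncontractible :: "'e set \<Rightarrow> ('e \<Rightarrow> 'v set) \<Rightarrow> 'e set set \<Rightarrow> bool" where
  "long_noncontractible E ends F = (\<forall>C \<subseteq> E.
      is_cycle ends C \<and> \<not> contractible ends F C \<longrightarrow> card C > 8)"

definition lattice_888 :: "'v set \<Rightarrow> 'e set \<Rightarrow> ('e \<Rightarrow> 'v set) \<Rightarrow> 'e set set \<Rightarrow> ('e set \<Rightarrow> colour) \<Rightarrow> bool" where
  "lattice_888 V E ends F fc = (cellular_map V E ends F \<and> trivalent V E ends \<and>
      (\<forall>f\<in>F. card f = 8) \<and> proper_face_col F fc \<and> euler_char V E F < 0)"

definition edge_col :: "'e set set \<Rightarrow> ('e set \<Rightarrow> colour) \<Rightarrow> 'e \<Rightarrow> colour" where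
  "edge_col F fc g = (THE c. \<forall>f\<in>F. g \<in> f \<longrightarrow> fc f \<noteq> c)"

definition Lcount :: "('v \<Rightarrow> 'v \<Rightarrow> bool) \<Rightarrow> ('v \<Rightarrow> 'v \<Rightarrow> bool) \<Rightarrow> nat" where
  "Lcount adjG adjH = card {{x, y} | x y. adjG x y \<and> \<not> adjH x y}"

(* ---- the super-plaquette algorithm ----
   Old edges g become Inl g; the new parallel edge f' created for the pair
   (shrink face S, edge f) is Inr (S, f). *)

definition sp_shrink :: "'e set set \<Rightarrow> 'e \<Rightarrow> 'e set set" where
  "sp_shrink F e = {f \<in> F. e \<in> f}"

definition sp_merge :: "'e set set \<Rightarrow> ('e set \<Rightarrow> colour) \<Rightarrow> 'e \<Rightarrow> 'e set set" where
  "sp_merge F fc e = {M \<in> F. fc M = edge_col F fc e \<and> (\<exists>S \<in> sp_shrink F e. M \<inter> S \<noteq> {})}"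

definition sp_new :: "'e set set \<Rightarrow> ('e set \<Rightarrow> colour) \<Rightarrow> ('e \<Rightarrow> 'v set) \<Rightarrow> 'v \<Rightarrow> 'v \<Rightarrow> 'e
                      \<Rightarrow> ('e set \<times> 'e) set" where
  "sp_new F fc ends u w e = {(S, f). S \<in> sp_shrink F e \<and> f \<in> S \<and>
      edge_col F fc f = edge_col F fc e \<and> u \<notin> ends f \<and> w \<notin> ends f}"

definition sp_ends :: "('e \<Rightarrow> 'v set) \<Rightarrow> 'e + ('e set \<times> 'e) \<Rightarrow> 'v set" where
  "sp_ends ends x = (case x of Inl g \<Rightarrow> ends g | Inr (S, f) \<Rightarrow> ends f)"

definition sp_faces :: "'e set set \<Rightarrow> ('e set \<Rightarrow> colour) \<Rightarrow> ('e \<Rightarrow> 'v set) \<Rightarrow> 'v \<Rightarrow> 'v \<Rightarrow> 'e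
                        \<Rightarrow> ('e + ('e set \<times> 'e)) set set" where
  "sp_faces F fc ends u w e =
     ((\<lambda>f. Inl ` f) ` (F - sp_shrink F e - sp_merge F fc e))
     \<union> {{Inl f, Inr (S, f)} | S f. (S, f) \<in> sp_new F fc ends u w e}
     \<union> {Inr ` sp_new F fc ends u w e \<union>
         Inl ` {g. (\<exists>M \<in> sp_merge F fc e. g \<in> M) \<and> (\<forall>S \<in> sp_shrink F e. g \<notin> S)}}"

definition sp_verts :: "'v set \<Rightarrow> 'v \<Rightarrow> 'v \<Rightarrow> 'v set" where
  "sp_verts V u w = V - {u, w}"

definition sp_edges :: "'e set set \<Rightarrow> ('e set \<Rightarrow> colour) \<Rightarrow> ('e \<Rightarrow> 'v set) \<Rightarrow> 'v \<Rightarrow> 'v \<Rightarrow> 'e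
                        \<Rightarrow> ('e + ('e set \<times> 'e)) set" where
  "sp_edges F fc ends u w e = {x. (\<exists>f \<in> sp_faces F fc ends u w e. x \<in> f) \<and>
                                  sp_ends ends x \<inter> {u, w} = {}}"

end

theory Submission
  imports Defs
begin

text \<open>The super-plaquette output keeps every old edge except the five at \<open>u\<close> or \<open>w\<close> and, on
  each of the two shrink faces, the two edges that avoid \<open>u\<close>, \<open>w\<close> and the colour \<open>D\<close> of \<open>e\<close>
  (the colours alternate around an octagon); every new edge is parallel to a kept old one, so
  exactly nine adjacencies are lost.

  A competitor \<open>H\<close> on \<open>V - {u, w'}\<close> loses the five pairs at \<open>u\<close> and \<open>w'\<close>. Each of the four
  other neighbours \<open>z\<close> of \<open>u\<close>, \<open>w'\<close> keeps two neighbours of \<open>G\<close> but has three edges in \<open>H\<close>,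
  so two of them join \<open>z\<close> to the same vertex \<open>p\<close>, and \<open>p\<close> then loses a pair of its own. These
  four pairs are distinct and avoid \<open>u\<close>, \<open>w'\<close>, since otherwise \<open>G\<close> would contain a cycle of
  length at most six, while every cycle has length at least eight: non-contractible ones by
  hypothesis, contractible ones by discharging over the disc they bound.\<close>

lemma card_2_other: "card X = 2 \<Longrightarrow> a \<in> X \<Longrightarrow> \<exists>b. b \<noteq> a \<and> X = {a, b}"
  by (auto simp: card_2_iff)

lemma card_2_eq_pair: "card X = 2 \<Longrightarrow> a \<in> X \<Longrightarrow> b \<in> X \<Longrightarrow> a \<noteq> b \<Longrightarrow> X = {a, b}"
  by (auto simp: card_2_iff)

lemma card_3_other: "card X = 3 \<Longrightarrow> a \<in> X \<Longrightarrow> b \<in> X \<Longrightarrow> a \<noteq> b \<Longrightarrow>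
    \<exists>c. c \<noteq> a \<and> c \<noteq> b \<and> X = {a, b, c}"
  by (auto simp: card_3_iff)

lemma Collect_eq_pairD:
  assumes "{x\<in>X. P x} = {a, b}"
  shows "a \<in> X" "P a" "b \<in> X" "P b" "x \<in> X \<Longrightarrow> P x \<Longrightarrow> x = a \<or> x = b"
proof -
  have "a \<in> {x\<in>X. P x}" "b \<in> {x\<in>X. P x}" using assms by simp_all
  then show "a \<in> X" "P a" "b \<in> X" "P b" by simp_all
  show "x \<in> X \<Longrightarrow> P x \<Longrightarrow> x = a \<or> x = b" using assms by (simp add: set_eq_iff) blast
qed

lemma sum_card_incidences_swap:
  assumes "finite A" "finite B"
  shows "(\<Sum>a\<in>A. card {b\<in>B. R a b}) = (\<Sum>b\<in>B. card {a\<in>A. R a b})"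
proof -
  have "card {b\<in>B. R a b} = (\<Sum>b\<in>B. if R a b then 1 else 0)" for a
    using sum.inter_filter[OF assms(2), of "\<lambda>_. 1::nat" "R a"] by simp
  moreover have "card {a\<in>A. R a b} = (\<Sum>a\<in>A. if R a b then 1 else 0)" for b
    using sum.inter_filter[OF assms(1), of "\<lambda>_. 1::nat" "\<lambda>a. R a b"] by simp
  ultimately show ?thesis by (simp add: sum.swap[of _ B])
qed

lemma colour_third_unique: "(a::colour) \<noteq> b \<Longrightarrow> c \<noteq> a \<Longrightarrow> c \<noteq> b \<Longrightarrow> d \<noteq> a \<Longrightarrow> d \<noteq> b \<Longrightarrow> d = c"
  by (cases a; cases b; cases c; cases d) auto

lemma colour_ex_other: "\<exists>c::colour. c \<noteq> a \<and> c \<noteq> b"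
  by (cases a; cases b) (auto intro: exI[of _ Col0] exI[of _ Col1] exI[of _ Col2])

text \<open>Applied below to the three edges \<open>g, h, k\<close> at a vertex: the faces there are three corners,
  one for each pair of edges.\<close>

lemma three_edges_three_faces:
  assumes dist: "g \<noteq> h" "g \<noteq> k" "h \<noteq> k"
    and two: "card {f\<in>F. g\<in>f} = 2" "card {f\<in>F. h\<in>f} = 2" "card {f\<in>F. k\<in>f} = 2"
    and corner: "\<And>f. f \<in> F \<Longrightarrow> g \<in> f \<or> h \<in> f \<or> k \<in> f \<Longrightarrow> card (f \<inter> {g, h, k}) = 2"
  obtains f1 f2 f3 where "distinct [f1, f2, f3]" "{f\<in>F. g\<in>f} = {f1, f2}"
    "{f\<in>F. h\<in>f} = {f1, f3}" "{f\<in>F. k\<in>f} = {f2, f3}"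
proof -
  have exactly_two: "(g\<in>f \<and> h\<in>f \<and> k\<notin>f) \<or> (g\<in>f \<and> k\<in>f \<and> h\<notin>f) \<or> (h\<in>f \<and> k\<in>f \<and> g\<notin>f)"
    if "f \<in> F" "g \<in> f \<or> h \<in> f \<or> k \<in> f" for f
    using corner[OF that] dist
    by (cases "g\<in>f"; cases "h\<in>f"; cases "k\<in>f") (auto simp: Int_insert_right)
  obtain A B where AB: "A \<noteq> B" "{f\<in>F. g\<in>f} = {A, B}"
    using two(1) by (auto simp: card_2_iff)
  then have A: "A \<in> F" "g \<in> A" and B: "B \<in> F" "g \<in> B" by auto
  have not_both: False if x: "x \<in> A" "x \<in> B" "x \<in> {h, k}" and y: "y \<in> {h, k}" "y \<noteq> x" for x y
  proof -
    have xy: "card {f\<in>F. x\<in>f} = 2" "card {f\<in>F. y\<in>f} = 2" using x(3) y(1) two by auto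
    have "{f\<in>F. x\<in>f} = {A, B}" using card_2_eq_pair[OF xy(1), of A B] x A B AB(1) by simp
    obtain C where C: "C \<in> F" "y \<in> C"
      using xy(2) by (metis (no_types, lifting) card.empty empty_Collect_eq zero_neq_numeral)
    have "g \<in> C \<or> x \<in> C" using exactly_two[OF C(1)] C(2) x(3) y by auto
    then have "C \<in> {A, B}" using AB(2) \<open>{f\<in>F. x\<in>f} = {A, B}\<close> C(1) by blast
    moreover have "y \<notin> A" "y \<notin> B"
      using exactly_two[OF A(1)] exactly_two[OF B(1)] A(2) B(2) x y dist by auto
    ultimately show False using C(2) by auto
  qed
  have "h \<in> A \<and> k \<in> B \<or> h \<in> B \<and> k \<in> A"
    using exactly_two[OF A(1)] exactly_two[OF B(1)] A(2) B(2) not_both[of h k] not_both[of k h] dist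
    by auto
  then obtain A B where AB: "A \<noteq> B" "{f\<in>F. g\<in>f} = {A, B}" "h \<in> A" "k \<in> B"
  proof
    assume "h \<in> B \<and> k \<in> A"
    moreover have "{f\<in>F. g\<in>f} = {B, A}" using AB(2) by (simp only: insert_commute)
    ultimately show thesis using that[of B A] AB(1) by simp
  qed (use AB that in simp)
  note A_B = Collect_eq_pairD(1-4)[OF AB(2)]
  have A: "A \<in> F" "g \<in> A" "k \<notin> A" using A_B exactly_two[of A] AB(3) dist by auto
  have B: "B \<in> F" "g \<in> B" "h \<notin> B" using A_B exactly_two[of B] AB(4) dist by auto
  have "A \<in> {f\<in>F. h\<in>f}" using A(1) AB(3) by simp
  then obtain C where C: "C \<noteq> A" "{f\<in>F. h\<in>f} = {A, C}"
    using card_2_other[OF two(2)] by blast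
  then have "C \<in> F" "h \<in> C" using Collect_eq_pairD(3,4) by blast+
  then have "g \<notin> C" "k \<in> C" using AB C B exactly_two by blast+
  then have "{f\<in>F. k\<in>f} = {B, C}"
    using card_2_eq_pair[OF two(3), of B C] B AB(4) \<open>C \<in> F\<close> \<open>k \<in> C\<close> \<open>g \<notin> C\<close> by auto
  moreover have "distinct [A, B, C]" using AB(1) C(1) B(2) \<open>g \<notin> C\<close> by auto
  ultimately show thesis using that AB(2) C(2) by blast
qed

lemma inc_edges_iff: "g \<in> inc_edges X ends v \<longleftrightarrow> g \<in> X \<and> v \<in> ends g"
  by (simp add: inc_edges_def)

lemma finite_verts_of: "finite U \<Longrightarrow> (\<And>g. g \<in> U \<Longrightarrow> card (ends g) = 2) \<Longrightarrow> finite (verts_of ends U)"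
  unfolding verts_of_def by (metis card.infinite finite_UN_I zero_neq_numeral)

lemma sum_degrees_eq_twice_card:
  assumes fin: "finite U" and two: "\<And>g. g \<in> U \<Longrightarrow> card (ends g) = 2"
  shows "(\<Sum>v\<in>verts_of ends U. card (inc_edges U ends v)) = 2 * card U"
proof -
  have "(\<Sum>v\<in>verts_of ends U. card {g\<in>U. v \<in> ends g}) = (\<Sum>g\<in>U. card {v\<in>verts_of ends U. v \<in> ends g})"
    by (rule sum_card_incidences_swap[OF finite_verts_of[OF fin two] fin])
  also have "\<dots> = (\<Sum>g\<in>U. 2)"
  proof (rule sum.cong)
    fix g assume g: "g \<in> U"
    have "{v\<in>verts_of ends U. v \<in> ends g} = ends g" using g unfolding verts_of_def by blast
    then show "card {v\<in>verts_of ends U. v \<in> ends g} = 2" using two g by simp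
  qed simp
  finally show ?thesis unfolding inc_edges_def by simp
qed

lemma card_verts_of_cycle:
  assumes C: "is_cycle ends C" and two: "\<And>g. g \<in> C \<Longrightarrow> card (ends g) = 2"
  shows "card (verts_of ends C) = card C"
proof -
  have "2 * card (verts_of ends C) = (\<Sum>v\<in>verts_of ends C. card (inc_edges C ends v))"
    using C unfolding is_cycle_def by simp
  also have "\<dots> = 2 * card C"
    using sum_degrees_eq_twice_card two C unfolding is_cycle_def by blast
  finally show ?thesis by simp
qed

context
  fixes n :: nat and v :: "nat \<Rightarrow> 'v" and c :: "nat \<Rightarrow> 'e" and ends :: "'e \<Rightarrow> 'v set"
  assumes n: "3 \<le> n" and inj: "inj_on v {..<n}"
    and ends_c: "\<And>i. i < n \<Longrightarrow> ends (c i) = {v i, v (Suc i mod n)}"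
begin

lemma cyclic_vertex_on_edge:
  assumes "i < n" "j < n" shows "v j \<in> ends (c i) \<longleftrightarrow> j = i \<or> j = Suc i mod n"
  using ends_c[OF assms(1)] inj assms n unfolding inj_on_def by auto

lemma cyclic_edges_inj: "inj_on c {..<n}"
proof (rule inj_onI, rule ccontr)
  fix i j assume ij: "i \<in> {..<n}" "j \<in> {..<n}" "c i = c j" "i \<noteq> j"
  then have i: "i < n" and j: "j < n" by simp_all
  have "v i \<in> ends (c i)" "v j \<in> ends (c j)" using ends_c i j by simp_all
  then have "v i \<in> ends (c j)" "v j \<in> ends (c i)" using ij(3) by simp_all
  then have "i = Suc j mod n" "j = Suc i mod n" using cyclic_vertex_on_edge i j ij(4) by auto
  moreover have "Suc k mod n = (if Suc k = n then 0 else Suc k)" if "k < n" for k using that by simp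
  ultimately show False using i j n by (auto split: if_splits)
qed

lemma cyclic_edges_degree:
  assumes x: "x \<in> verts_of ends (c ` {..<n})"
  shows "card (inc_edges (c ` {..<n}) ends x) = 2"
proof -
  define prv where "prv j = (if j = 0 then n - 1 else j - 1)" for j
  obtain i where i: "i < n" "x \<in> ends (c i)" using x unfolding verts_of_def by blast
  moreover have "Suc i mod n < n" using n by simp
  ultimately obtain j where j: "j < n" "x = v j" using ends_c[OF i(1)] by blast
  have prv: "prv j < n" "prv j \<noteq> j" using j(1) n unfolding prv_def by auto
  have on_c: "v j \<in> ends (c i) \<longleftrightarrow> i = j \<or> i = prv j" if "i < n" for i
    using cyclic_vertex_on_edge[OF that j(1)] that j(1) n unfolding prv_def
    by (cases "Suc i = n") auto
  have "inc_edges (c ` {..<n}) ends x = {c j, c (prv j)}"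
    using on_c j prv unfolding inc_edges_def by auto
  moreover have "c j \<noteq> c (prv j)" using cyclic_edges_inj j(1) prv by (simp add: inj_on_eq_iff)
  ultimately show ?thesis by simp
qed

lemma cyclic_edges_edge_conn: "edge_conn ends (c ` {..<n})"
proof -
  let ?R = "{(a, b). a \<in> c ` {..<n} \<and> b \<in> c ` {..<n} \<and> ends a \<inter> ends b \<noteq> {}}"
  have from_c0: "(c 0, c i) \<in> ?R\<^sup>*" if "i < n" for i
    using that
  proof (induction i)
    case (Suc i)
    then have i: "i < n" by simp
    have "v (Suc i) \<in> ends (c i) \<inter> ends (c (Suc i))"
      using ends_c[OF i] ends_c[OF Suc.prems] Suc.prems by simp
    then have "(c i, c (Suc i)) \<in> ?R" using i Suc.prems by blast
    with Suc.IH[OF i] show ?case by (rule rtrancl_into_rtrancl)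
  qed simp
  have sym: "sym (?R\<^sup>*)" by (rule sym_rtrancl) (auto simp: sym_def)
  show ?thesis unfolding edge_conn_def
  proof (intro ballI)
    fix g h assume "g \<in> c ` {..<n}" "h \<in> c ` {..<n}"
    then obtain i j where "i < n" "j < n" "g = c i" "h = c j" by blast
    then have "(g, c 0) \<in> ?R\<^sup>*" "(c 0, h) \<in> ?R\<^sup>*" using from_c0 symD[OF sym] by blast+
    then show "(g, h) \<in> ?R\<^sup>*" by (rule rtrancl_trans)
  qed
qed

lemma cyclic_edges_is_cycle: "is_cycle ends (c ` {..<n})"
  unfolding is_cycle_def using cyclic_edges_degree cyclic_edges_edge_conn n
  by (auto simp: lessThan_empty_iff)

end

lemma cycle_of_cyclic_walk:
  assumes n: "3 \<le> n" and inj: "inj_on v {..<n}"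
    and walk: "\<forall>i<n. adj E ends (v i) (v (Suc i mod n))"
  obtains C where "C \<subseteq> E" "is_cycle ends C" "card C = n"
proof -
  define c where "c i = (SOME g. g \<in> E \<and> ends g = {v i, v (Suc i mod n)})" for i
  have c: "c i \<in> E \<and> ends (c i) = {v i, v (Suc i mod n)}" if "i < n" for i
  proof -
    have "\<exists>g. g \<in> E \<and> ends g = {v i, v (Suc i mod n)}" using walk that unfolding adj_def by blast
    then show ?thesis unfolding c_def by (rule someI_ex)
  qed
  have "c ` {..<n} \<subseteq> E" using c by auto
  moreover have "is_cycle ends (c ` {..<n})"
    by (rule cyclic_edges_is_cycle[where ends = ends, OF n inj]) (use c in simp)
  moreover have "inj_on c {..<n}"
    by (rule cyclic_edges_inj[where ends = ends, OF n inj]) (use c in simp)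
  then have "card (c ` {..<n}) = n" by (simp add: card_image)
  ultimately show thesis by (rule that)
qed

section \<open>Local structure of the lattice\<close>

locale lattice888 =
  fixes V :: "'v set" and E :: "'e set" and ends :: "'e \<Rightarrow> 'v set"
    and F :: "'e set set" and fc :: "'e set \<Rightarrow> colour"
  assumes lattice: "lattice_888 V E ends F fc"
begin

lemma finite_E: "finite E"
  using lattice unfolding lattice_888_def cellular_map_def by auto

lemma finite_F: "finite F"
  using lattice unfolding lattice_888_def cellular_map_def by auto

lemma ends_subset: "g \<in> E \<Longrightarrow> ends g \<subseteq> V"
  using lattice unfolding lattice_888_def cellular_map_def by auto

lemma card_ends: "g \<in> E \<Longrightarrow> card (ends g) = 2"
  using lattice unfolding lattice_888_def cellular_map_def by auto

lemma face_subset: "f \<in> F \<Longrightarrow> f \<subseteq> E"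
  using lattice unfolding lattice_888_def cellular_map_def by auto

lemma face_is_cycle: "f \<in> F \<Longrightarrow> is_cycle ends f"
  using lattice unfolding lattice_888_def cellular_map_def by auto

lemma card_faces_at_edge: "g \<in> E \<Longrightarrow> card {f\<in>F. g\<in>f} = 2"
  using lattice unfolding lattice_888_def cellular_map_def by auto

lemma card_edges_at_vertex: "v \<in> V \<Longrightarrow> card (inc_edges E ends v) = 3"
  using lattice unfolding lattice_888_def trivalent_def by auto

lemma card_face: "f \<in> F \<Longrightarrow> card f = 8"
  using lattice unfolding lattice_888_def by auto

lemma proper_colouring: "f1 \<in> F \<Longrightarrow> f2 \<in> F \<Longrightarrow> f1 \<noteq> f2 \<Longrightarrow> g \<in> f1 \<Longrightarrow> g \<in> f2 \<Longrightarrow> fc f1 \<noteq> fc f2"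
  using lattice unfolding lattice_888_def proper_face_col_def by blast

lemma finite_face: "f \<in> F \<Longrightarrow> finite f"
  using face_is_cycle unfolding is_cycle_def by blast

lemma finite_ends: "g \<in> E \<Longrightarrow> finite (ends g)"
  using card_ends by (metis card.infinite zero_neq_numeral)

lemma finite_inc_edges: "finite (inc_edges E ends v)"
  using finite_E unfolding inc_edges_def by simp

lemma card_face_edges_at_vertex: "f \<in> F \<Longrightarrow> g \<in> f \<Longrightarrow> v \<in> ends g \<Longrightarrow> card (inc_edges f ends v) = 2"
  using face_is_cycle unfolding is_cycle_def verts_of_def by blast

lemma faces_at_edge_pair:
  assumes "g \<in> E" obtains A B where "A \<noteq> B" "{f\<in>F. g\<in>f} = {A, B}"
  using card_faces_at_edge[OF assms] that unfolding card_2_iff by blast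

lemma faces_around_vertex:
  assumes v: "inc_edges E ends v = {g, h, k}" and dist: "g \<noteq> h" "g \<noteq> k" "h \<noteq> k"
  obtains f1 f2 f3 where "distinct [f1, f2, f3]" "{f\<in>F. g\<in>f} = {f1, f2}"
    "{f\<in>F. h\<in>f} = {f1, f3}" "{f\<in>F. k\<in>f} = {f2, f3}"
proof -
  have E: "g \<in> E" "h \<in> E" "k \<in> E" and at_v: "v \<in> ends g" "v \<in> ends h" "v \<in> ends k"
    using v unfolding inc_edges_def by blast+
  have "card (f \<inter> {g, h, k}) = 2" if f: "f \<in> F" "g \<in> f \<or> h \<in> f \<or> k \<in> f" for f
  proof -
    have "inc_edges f ends v = f \<inter> {g, h, k}"
      using face_subset[OF f(1)] v unfolding inc_edges_def by blast
    moreover obtain x where "x \<in> f" "v \<in> ends x" using f(2) at_v by blast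
    ultimately show ?thesis using card_face_edges_at_vertex[OF f(1)] by metis
  qed
  with three_edges_three_faces[OF dist card_faces_at_edge[OF E(1)] card_faces_at_edge[OF E(2)]
      card_faces_at_edge[OF E(3)]]
  show thesis using that by blast
qed

lemma faces_around_edges_at_vertex:
  assumes v: "v \<in> V" and gh: "g \<in> E" "h \<in> E" "g \<noteq> h" "v \<in> ends g" "v \<in> ends h"
  obtains k f1 f2 f3 where "inc_edges E ends v = {g, h, k}" "k \<noteq> g" "k \<noteq> h"
    "distinct [f1, f2, f3]" "{f\<in>F. g\<in>f} = {f1, f2}" "{f\<in>F. h\<in>f} = {f1, f3}" "{f\<in>F. k\<in>f} = {f2, f3}"
proof -
  have "g \<in> inc_edges E ends v" "h \<in> inc_edges E ends v" using gh by (simp_all add: inc_edges_iff)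
  then obtain k where k: "k \<noteq> g" "k \<noteq> h" "inc_edges E ends v = {g, h, k}"
    using card_3_other[OF card_edges_at_vertex[OF v] _ _ gh(3)] by metis
  obtain f1 f2 f3 where "distinct [f1, f2, f3]" "{f\<in>F. g\<in>f} = {f1, f2}"
    "{f\<in>F. h\<in>f} = {f1, f3}" "{f\<in>F. k\<in>f} = {f2, f3}"
    by (rule faces_around_vertex[OF k(3) gh(3) k(1)[symmetric] k(2)[symmetric]])
  with k show thesis by (intro that)
qed

lemma faces_at_edge_distinct: "g \<in> E \<Longrightarrow> {f\<in>F. g\<in>f} = {A, B} \<Longrightarrow> A \<noteq> B"
  using card_faces_at_edge by force

lemma edge_col_eq:
  assumes g: "g \<in> E" and AB: "{f\<in>F. g\<in>f} = {A, B}" and c: "c \<noteq> fc A" "c \<noteq> fc B"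
  shows "edge_col F fc g = c"
  unfolding edge_col_def
proof (rule the_equality)
  note faces = Collect_eq_pairD[OF AB]
  show "\<forall>f\<in>F. g \<in> f \<longrightarrow> fc f \<noteq> c" using faces(5) c by blast
  have "fc A \<noteq> fc B"
    using proper_colouring faces(1-4) faces_at_edge_distinct[OF g AB] by blast
  fix c' assume "\<forall>f\<in>F. g \<in> f \<longrightarrow> fc f \<noteq> c'"
  then have "c' \<noteq> fc A" "c' \<noteq> fc B" using faces(1-4) by blast+
  then show "c' = c" using colour_third_unique \<open>fc A \<noteq> fc B\<close> c by metis
qed

lemma edge_col_faces:
  assumes g: "g \<in> E" and AB: "{f\<in>F. g\<in>f} = {A, B}"
  shows "fc A \<noteq> fc B" "edge_col F fc g \<noteq> fc A" "edge_col F fc g \<noteq> fc B"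
proof -
  show "fc A \<noteq> fc B"
    using proper_colouring Collect_eq_pairD(1-4)[OF AB] faces_at_edge_distinct[OF g AB] by blast
  obtain c where "c \<noteq> fc A" "c \<noteq> fc B" using colour_ex_other by blast
  then show "edge_col F fc g \<noteq> fc A" "edge_col F fc g \<noteq> fc B" using edge_col_eq[OF g AB] by simp_all
qed

lemma edge_col_ne_face:
  assumes "g \<in> f" "f \<in> F" shows "edge_col F fc g \<noteq> fc f"
proof -
  have g: "g \<in> E" using assms face_subset by blast
  obtain A B where AB: "A \<noteq> B" "{f\<in>F. g\<in>f} = {A, B}" by (rule faces_at_edge_pair[OF g])
  have "f = A \<or> f = B" using Collect_eq_pairD(5)[OF AB(2)] assms by blast
  then show ?thesis using edge_col_faces[OF g AB(2)] by blast
qed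

lemma edge_col_ne_adjacent:
  assumes f: "f \<in> F" "g \<in> f" "h \<in> f" "g \<noteq> h" and v: "v \<in> ends g" "v \<in> ends h"
  shows "edge_col F fc g \<noteq> edge_col F fc h"
proof -
  have E: "g \<in> E" "h \<in> E" using face_subset f by auto
  have vV: "v \<in> V" using ends_subset[OF E(1)] v(1) by blast
  obtain k f1 f2 f3 where k: "inc_edges E ends v = {g, h, k}" "k \<noteq> g" "k \<noteq> h"
    and ff: "distinct [f1, f2, f3]" "{f\<in>F. g\<in>f} = {f1, f2}" "{f\<in>F. h\<in>f} = {f1, f3}"
      "{f\<in>F. k\<in>f} = {f2, f3}"
    by (rule faces_around_edges_at_vertex[OF vV E f(4) v])
  have "k \<in> E" using k unfolding inc_edges_def by blast
  have "fc f1 \<noteq> fc f2" "fc f1 \<noteq> fc f3" "fc f2 \<noteq> fc f3"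
    using edge_col_faces(1)[OF E(1) ff(2)] edge_col_faces(1)[OF E(2) ff(3)]
      edge_col_faces(1)[OF \<open>k \<in> E\<close> ff(4)] by simp_all
  then have "edge_col F fc g = fc f3" "edge_col F fc h = fc f2"
    using edge_col_eq[OF E(1) ff(2)] edge_col_eq[OF E(2) ff(3)] by metis+
  then show ?thesis using \<open>fc f2 \<noteq> fc f3\<close> by simp
qed

text \<open>A face through two parallel edges would consist of those two edges alone.\<close>

lemma inj_on_ends: "inj_on ends E"
proof (rule inj_onI, rule ccontr)
  fix g1 g2 assume g: "g1 \<in> E" "g2 \<in> E" "ends g1 = ends g2" and ne: "g1 \<noteq> g2"
  obtain x y where xy: "x \<noteq> y" "ends g1 = {x, y}" using card_ends[OF g(1)] by (auto simp: card_2_iff)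
  have at_x: "x \<in> ends g1" "x \<in> ends g2" using xy g(3) by auto
  have "x \<in> V" using ends_subset g xy by auto
  then obtain k f1 f2 f3 where "inc_edges E ends x = {g1, g2, k}" "k \<noteq> g1" "k \<noteq> g2"
    "distinct [f1, f2, f3]" "{f\<in>F. g1\<in>f} = {f1, f2}" "{f\<in>F. g2\<in>f} = {f1, f3}" "{f\<in>F. k\<in>f} = {f2, f3}"
    by (rule faces_around_edges_at_vertex[OF _ g(1,2) ne at_x])
  then have f1: "f1 \<in> F" "g1 \<in> f1" "g2 \<in> f1" using Collect_eq_pairD by metis+
  have at_xy: "inc_edges f1 ends z = {g1, g2}" if "z \<in> {x, y}" for z
    using card_2_eq_pair[OF card_face_edges_at_vertex[OF f1(1,2)], of z g1 g2] f1 xy g that ne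
    by (auto simp: inc_edges_iff)
  let ?R = "{(a, b). a \<in> f1 \<and> b \<in> f1 \<and> ends a \<inter> ends b \<noteq> {}}"
  have "b \<in> {g1, g2}" if "(g1, b) \<in> ?R\<^sup>*" for b
    using that
  proof (induction rule: rtrancl_induct)
    case (step a b)
    then have "ends a = {x, y}" using xy g by auto
    then obtain z where "z \<in> {x, y}" "b \<in> inc_edges f1 ends z" using step by (auto simp: inc_edges_iff)
    then show ?case using at_xy by blast
  qed simp
  then have "f1 \<subseteq> {g1, g2}"
    using face_is_cycle[OF f1(1)] f1(2) unfolding is_cycle_def edge_conn_def by blast
  then have "card f1 \<le> 2" using card_mono[of "{g1, g2}" f1] ne by simp
  then show False using card_face[OF f1(1)] by simp
qed

lemma card_verts_of_face: "f \<in> F \<Longrightarrow> card (verts_of ends f) = 8"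
  using card_verts_of_cycle[OF face_is_cycle, of f] card_ends face_subset card_face by auto

text \<open>The two edges of a face at each of its vertices have the two colours other than that of the
  face, so each of these colours occupies every second edge.\<close>

lemma card_face_edges_of_colour:
  assumes f: "f \<in> F" and D: "D \<noteq> fc f"
  shows "card {g\<in>f. edge_col F fc g = D} = 4"
proof -
  let ?fD = "{g\<in>f. edge_col F fc g = D}"
  have fin: "finite f" using finite_face[OF f] .
  have fV: "finite (verts_of ends f)"
    unfolding verts_of_def using fin finite_ends face_subset[OF f] by blast
  have one: "card {g\<in>?fD. v \<in> ends g} = 1" if v: "v \<in> verts_of ends f" for v
  proof -
    obtain g0 where "g0 \<in> f" "v \<in> ends g0" using v unfolding verts_of_def by blast
    then obtain g1 g2 where g12: "g1 \<noteq> g2" "inc_edges f ends v = {g1, g2}"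
      using card_face_edges_at_vertex[OF f] by (metis card_2_iff)
    then have gm: "g1 \<in> f" "g2 \<in> f" "v \<in> ends g1" "v \<in> ends g2"
      unfolding inc_edges_def by blast+
    have "edge_col F fc g1 \<noteq> edge_col F fc g2"
      using edge_col_ne_adjacent[OF f gm(1,2) g12(1) gm(3,4)] .
    moreover have "edge_col F fc g1 \<noteq> fc f" "edge_col F fc g2 \<noteq> fc f"
      using edge_col_ne_face f gm by blast+
    ultimately have "edge_col F fc g1 = D \<and> edge_col F fc g2 \<noteq> D
        \<or> edge_col F fc g1 \<noteq> D \<and> edge_col F fc g2 = D"
      using colour_third_unique D by metis
    moreover have "{g\<in>?fD. v \<in> ends g} = {x\<in>inc_edges f ends v. edge_col F fc x = D}"
      unfolding inc_edges_def by blast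
    ultimately have "{g\<in>?fD. v \<in> ends g} = {g1} \<or> {g\<in>?fD. v \<in> ends g} = {g2}"
      unfolding g12(2) by auto
    then show ?thesis by auto
  qed
  have two: "card {v\<in>verts_of ends f. v \<in> ends g} = 2" if "g \<in> ?fD" for g
  proof -
    have "{v\<in>verts_of ends f. v \<in> ends g} = ends g" using that unfolding verts_of_def by blast
    then show ?thesis using card_ends that face_subset[OF f] by auto
  qed
  have "card (verts_of ends f) = (\<Sum>v\<in>verts_of ends f. card {g\<in>?fD. v \<in> ends g})"
    using one by simp
  also have "\<dots> = (\<Sum>g\<in>?fD. card {v\<in>verts_of ends f. v \<in> ends g})"
    by (rule sum_card_incidences_swap) (use fV fin in simp_all)
  also have "\<dots> = 2 * card ?fD" using two by simp
  finally show ?thesis using card_verts_of_face[OF f] by simp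
qed

lemma card_edges_at_edge:
  assumes e: "e \<in> E" "ends e = {u, w}"
  shows "card (inc_edges E ends u \<union> inc_edges E ends w) = 5"
proof -
  have uw: "u \<noteq> w" using card_ends[OF e(1)] e(2) by (cases "u = w") auto
  have "inc_edges E ends u \<inter> inc_edges E ends w = {e}"
  proof (intro equalityI subsetI)
    fix g assume "g \<in> inc_edges E ends u \<inter> inc_edges E ends w"
    then have g: "g \<in> E" "u \<in> ends g" "w \<in> ends g" by (auto simp: inc_edges_iff)
    then have "ends g = ends e" using card_2_eq_pair[OF card_ends[OF g(1)]] uw e(2) by blast
    then show "g \<in> {e}" using inj_on_ends g(1) e(1) by (simp add: inj_on_eq_iff)
  qed (use e in \<open>auto simp: inc_edges_iff\<close>)
  moreover have "u \<in> V" "w \<in> V" using ends_subset[OF e(1)] e(2) by auto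
  ultimately show ?thesis
    using card_Un_Int[OF finite_inc_edges finite_inc_edges, of u w] card_edges_at_vertex by simp
qed

lemma face_edges_beside_edge:
  assumes e: "e \<in> E" "ends e = {u, w}" and S: "S \<in> F" "e \<in> S"
  obtains a b where "inc_edges S ends u = {e, a}" "inc_edges S ends w = {e, b}" "a \<noteq> e" "b \<noteq> e" "a \<noteq> b"
proof -
  have uw: "u \<noteq> w" using card_ends[OF e(1)] e(2) by (cases "u = w") auto
  have at_u: "u \<in> ends e" and at_w: "w \<in> ends e" using e(2) by auto
  obtain a where a: "a \<noteq> e" "inc_edges S ends u = {e, a}"
    using card_2_other[OF card_face_edges_at_vertex[OF S(1,2) at_u], of e] S at_u
    by (auto simp: inc_edges_iff)
  obtain b where b: "b \<noteq> e" "inc_edges S ends w = {e, b}"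
    using card_2_other[OF card_face_edges_at_vertex[OF S(1,2) at_w], of e] S at_w
    by (auto simp: inc_edges_iff)
  have "a \<noteq> b"
  proof
    assume "a = b"
    then have "a \<in> S" "u \<in> ends a" "w \<in> ends a" using a(2) b(2) unfolding inc_edges_def by blast+
    then have "ends a = ends e"
      using card_2_eq_pair[OF card_ends, of a u w] face_subset[OF S(1)] uw e(2) by auto
    then show False
      using inj_on_ends face_subset[OF S(1)] \<open>a \<in> S\<close> e(1) a(1) by (auto simp: inj_on_eq_iff)
  qed
  then show thesis using that a b by blast
qed

text \<open>A face through the edge \<open>e = {u, w}\<close> has four edges not of the colour of \<open>e\<close>; exactly two
  of them, the neighbours of \<open>e\<close> on the face, touch \<open>u\<close> or \<open>w\<close>.\<close>

lemma card_face_edges_off_edge: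
  assumes e: "e \<in> E" "ends e = {u, w}" and S: "S \<in> F" "e \<in> S"
  shows "card {g\<in>S. edge_col F fc g \<noteq> edge_col F fc e \<and> u \<notin> ends g \<and> w \<notin> ends g} = 2"
proof -
  let ?D = "edge_col F fc e"
  let ?N = "{g\<in>S. edge_col F fc g \<noteq> ?D}"
  have "?N = S - {g\<in>S. edge_col F fc g = ?D}" by blast
  then have "card ?N = 4"
    using card_face_edges_of_colour[OF S(1) edge_col_ne_face[OF S(2,1)]]
      card_face[OF S(1)] card_Diff_subset[of "{g\<in>S. edge_col F fc g = ?D}" S] finite_face[OF S(1)]
    by simp
  obtain a b where ab: "inc_edges S ends u = {e, a}" "inc_edges S ends w = {e, b}" "a \<noteq> e" "b \<noteq> e" "a \<noteq> b"
    by (rule face_edges_beside_edge[OF e S])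
  have am: "a \<in> S" "u \<in> ends a" and bm: "b \<in> S" "w \<in> ends b"
    using ab(1,2) unfolding inc_edges_def by blast+
  have cols: "edge_col F fc a \<noteq> ?D" "edge_col F fc b \<noteq> ?D"
    using edge_col_ne_adjacent[OF S(1,2) am(1) ab(3)[symmetric] _ am(2)]
      edge_col_ne_adjacent[OF S(1,2) bm(1) ab(4)[symmetric] _ bm(2)] e(2) by simp_all
  have "{g\<in>?N. u \<in> ends g \<or> w \<in> ends g} = {a, b}"
  proof (intro equalityI subsetI)
    fix g assume "g \<in> {g\<in>?N. u \<in> ends g \<or> w \<in> ends g}"
    then have "g \<in> inc_edges S ends u \<or> g \<in> inc_edges S ends w" "g \<noteq> e"
      by (auto simp: inc_edges_iff)
    then show "g \<in> {a, b}" using ab(1,2) by auto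
  qed (use am bm cols in auto)
  moreover have "{g\<in>S. edge_col F fc g \<noteq> ?D \<and> u \<notin> ends g \<and> w \<notin> ends g}
      = ?N - {g\<in>?N. u \<in> ends g \<or> w \<in> ends g}" by blast
  ultimately have "{g\<in>S. edge_col F fc g \<noteq> ?D \<and> u \<notin> ends g \<and> w \<notin> ends g} = ?N - {a, b}"
    and "{a, b} \<subseteq> ?N" by auto
  moreover have "finite ?N" using finite_face[OF S(1)] by simp
  ultimately show ?thesis using \<open>card ?N = 4\<close> \<open>a \<noteq> b\<close> by (simp add: card_Diff_subset)
qed

subsection \<open>Cycles are long\<close>

lemma face_unique_at_corner:
  assumes ab: "a \<in> E" "b \<in> E" "a \<noteq> b" "v \<in> ends a" "v \<in> ends b"
    and f: "f \<in> F" "a \<in> f" "b \<in> f" and f': "f' \<in> F" "a \<in> f'" "b \<in> f'"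
  shows "f = f'"
proof -
  have "v \<in> V" using ends_subset ab by auto
  then obtain k f1 f2 f3 where "inc_edges E ends v = {a, b, k}" "k \<noteq> a" "k \<noteq> b"
    and ff: "distinct [f1, f2, f3]" "{f\<in>F. a\<in>f} = {f1, f2}" "{f\<in>F. b\<in>f} = {f1, f3}"
      "{f\<in>F. k\<in>f} = {f2, f3}"
    by (rule faces_around_edges_at_vertex[OF _ ab])
  have "f \<in> {f1, f2} \<inter> {f1, f3}" "f' \<in> {f1, f2} \<inter> {f1, f3}"
    using f f' unfolding ff(2,3)[symmetric] by simp_all
  then show ?thesis using ff(1) by auto
qed

lemma card_faces_at_vertex_le:
  assumes v: "v \<in> V"
  shows "card {f\<in>F. v \<in> verts_of ends f} \<le> 3"
proof -
  obtain g h k where ghk: "inc_edges E ends v = {g, h, k}" "g \<noteq> h" "h \<noteq> k" "g \<noteq> k"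
    using card_edges_at_vertex[OF v] unfolding card_3_iff by metis
  obtain f1 f2 f3 where ff: "distinct [f1, f2, f3]" "{f\<in>F. g\<in>f} = {f1, f2}"
    "{f\<in>F. h\<in>f} = {f1, f3}" "{f\<in>F. k\<in>f} = {f2, f3}"
    by (rule faces_around_vertex[OF ghk(1,2,4,3)])
  have "{f\<in>F. v \<in> verts_of ends f} \<subseteq> {f\<in>F. g\<in>f} \<union> {f\<in>F. h\<in>f} \<union> {f\<in>F. k\<in>f}"
  proof
    fix f assume f: "f \<in> {f\<in>F. v \<in> verts_of ends f}"
    then obtain x where "x \<in> f" "v \<in> ends x" unfolding verts_of_def by blast
    then have "x \<in> {g, h, k}" using f face_subset unfolding ghk(1)[symmetric] inc_edges_def by blast
    then show "f \<in> {f\<in>F. g\<in>f} \<union> {f\<in>F. h\<in>f} \<union> {f\<in>F. k\<in>f}" using f \<open>x \<in> f\<close> by auto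
  qed
  also have "\<dots> = {f1, f2, f3}" unfolding ff(2-4) by auto
  finally have "card {f\<in>F. v \<in> verts_of ends f} \<le> card {f1, f2, f3}" by (intro card_mono) auto
  also have "\<dots> \<le> 3" using card_length[of "[f1, f2, f3]"] by simp
  finally show ?thesis .
qed

lemma disc_vertex_of_degree_two:
  assumes S: "S \<subseteq> F" "f0 \<in> S" and deg: "inc_edges (\<Union>S) ends v = {a, b}" "a \<noteq> b"
    and corner: "inc_edges f0 ends v = {a, b}"
  shows "{f\<in>S. v \<in> verts_of ends f} = {f0}" "v \<in> verts_of ends {g. odd (card {f\<in>S. g\<in>f})}"
proof -
  have f0F: "f0 \<in> F" using S by blast
  have abm: "a \<in> f0" "b \<in> f0" "v \<in> ends a" "v \<in> ends b" using corner unfolding inc_edges_def by blast+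
  have abE: "a \<in> E" "b \<in> E" using abm f0F face_subset by blast+
  have only_f0: "f = f0" if f: "f \<in> S" "v \<in> verts_of ends f" for f
  proof -
    have fF: "f \<in> F" using f S by blast
    obtain x where "x \<in> f" "v \<in> ends x" using f unfolding verts_of_def by blast
    then have "card (inc_edges f ends v) = 2" using card_face_edges_at_vertex[OF fF] by blast
    moreover have "inc_edges f ends v \<subseteq> {a, b}" using f deg(1) unfolding inc_edges_def by blast
    ultimately have "inc_edges f ends v = {a, b}"
      using card_subset_eq[of "{a, b}" "inc_edges f ends v"] deg(2) by simp
    then have "a \<in> f" "b \<in> f" unfolding inc_edges_def by blast+
    then show ?thesis using face_unique_at_corner[OF abE deg(2) abm(3,4) fF _ _ f0F abm(1,2)] by simp
  qed
  show "{f\<in>S. v \<in> verts_of ends f} = {f0}"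
    using only_f0 S(2) abm(1,3) unfolding verts_of_def by blast
  have "{f\<in>S. a\<in>f} = {f0}"
  proof (intro equalityI subsetI)
    fix f assume "f \<in> {f\<in>S. a\<in>f}"
    then have "f \<in> S" "v \<in> verts_of ends f" using abm(3) unfolding verts_of_def by auto
    then show "f \<in> {f0}" using only_f0 by simp
  qed (use S(2) abm(1) in simp)
  then have "a \<in> {g. odd (card {f\<in>S. g\<in>f})}" by simp
  then show "v \<in> verts_of ends {g. odd (card {f\<in>S. g\<in>f})}"
    using abm(3) unfolding verts_of_def by blast
qed

text \<open>Discharging for the disc bounded by a contractible cycle: a vertex of the disc with
  \<open>d\<close> disc edges and \<open>k\<close> disc faces gets charge \<open>8 - 4 d + k\<close>, which is positive (namely at
  most \<open>1\<close>) only on the boundary cycle.\<close>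

lemma disc_vertex_charge_le:
  assumes S: "S \<subseteq> F" and v: "v \<in> verts_of ends (\<Union>S)"
  shows "8 - 4 * int (card (inc_edges (\<Union>S) ends v)) + int (card {f\<in>S. v \<in> verts_of ends f})
    \<le> (if v \<in> verts_of ends {g. odd (card {f\<in>S. g\<in>f})} then 1 else 0)"
proof -
  let ?deg = "card (inc_edges (\<Union>S) ends v)" and ?k = "card {f\<in>S. v \<in> verts_of ends f}"
  obtain g f0 where g: "f0 \<in> S" "g \<in> f0" "v \<in> ends g" using v unfolding verts_of_def by blast
  have f0F: "f0 \<in> F" using g S by blast
  have vV: "v \<in> V" using ends_subset face_subset[OF f0F] g by blast
  have sub: "inc_edges (\<Union>S) ends v \<subseteq> inc_edges E ends v"
    using S face_subset unfolding inc_edges_def by blast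
  then have deg3: "?deg \<le> 3" using card_edges_at_vertex[OF vV] card_mono[OF finite_inc_edges] by metis
  have fin: "finite (inc_edges (\<Union>S) ends v)" by (rule finite_subset[OF sub finite_inc_edges])
  have sub0: "inc_edges f0 ends v \<subseteq> inc_edges (\<Union>S) ends v" using g(1) unfolding inc_edges_def by blast
  have c0: "card (inc_edges f0 ends v) = 2" using card_face_edges_at_vertex[OF f0F g(2,3)] .
  have "?k \<le> card {f\<in>F. v \<in> verts_of ends f}"
    by (rule card_mono) (use S finite_F in auto)
  then have k3: "?k \<le> 3" using card_faces_at_vertex_le[OF vV] by simp
  show ?thesis
  proof (cases "?deg = 2")
    case False
    then show ?thesis using deg3 k3 card_mono[OF fin sub0] c0 by simp
  next
    case True
    obtain a b where ab: "a \<noteq> b" "inc_edges f0 ends v = {a, b}" using c0 by (metis card_2_iff)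
    moreover have "inc_edges (\<Union>S) ends v = inc_edges f0 ends v"
      using card_subset_eq[OF fin sub0] c0 True by simp
    ultimately show ?thesis using disc_vertex_of_degree_two[OF S g(1)] True by simp
  qed
qed
lemma sum_corners:
  assumes S: "S \<subseteq> F"
  shows "(\<Sum>v\<in>verts_of ends (\<Union>S). card {f\<in>S. v \<in> verts_of ends f}) = 8 * card S"
proof -
  let ?VU = "verts_of ends (\<Union>S)"
  have finS: "finite S" using S finite_F finite_subset by blast
  have "\<Union>S \<subseteq> E" using S face_subset by blast
  then have finVU: "finite ?VU"
    using finite_verts_of[of "\<Union>S"] finite_subset[OF _ finite_E] card_ends by blast
  have "(\<Sum>v\<in>?VU. card {f\<in>S. v \<in> verts_of ends f}) = (\<Sum>f\<in>S. card {v\<in>?VU. v \<in> verts_of ends f})"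
    by (rule sum_card_incidences_swap[OF finVU finS])
  also have "\<dots> = (\<Sum>f\<in>S. 8)"
  proof (rule sum.cong)
    fix f assume f: "f \<in> S"
    have "{v\<in>?VU. v \<in> verts_of ends f} = verts_of ends f" using f unfolding verts_of_def by blast
    then show "card {v\<in>?VU. v \<in> verts_of ends f} = 8" using card_verts_of_face f S by auto
  qed simp
  finally show ?thesis by simp
qed

lemma card_contractible_cycle_ge:
  assumes C: "C \<subseteq> E" "is_cycle ends C" and contr: "contractible ends F C"
  shows "8 \<le> card C"
proof -
  obtain S where S: "S \<subseteq> F" "{g. odd (card {f\<in>S. g\<in>f})} = C"
      "euler_char (verts_of ends (\<Union>S)) (\<Union>S) S = 1"
    using contr unfolding contractible_def by blast
  define U where "U = \<Union>S"
  define VU where "VU = verts_of ends U"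
  define charge where "charge v = 8 - 4 * int (card (inc_edges U ends v))
    + int (card {f\<in>S. v \<in> verts_of ends f})" for v
  have UE: "U \<subseteq> E" unfolding U_def using S(1) face_subset by blast
  have finU: "finite U" using UE finite_E finite_subset by blast
  have finVU: "finite VU" unfolding VU_def using finite_verts_of[OF finU] card_ends UE by blast
  have degrees: "(\<Sum>v\<in>VU. card (inc_edges U ends v)) = 2 * card U"
    unfolding VU_def by (rule sum_degrees_eq_twice_card[OF finU]) (use card_ends UE in blast)
  have corners: "(\<Sum>v\<in>VU. card {f\<in>S. v \<in> verts_of ends f}) = 8 * card S"
    unfolding VU_def U_def by (rule sum_corners[OF S(1)])
  have "(\<Sum>v\<in>VU. charge v) = 8 * int (card VU) - 4 * int (\<Sum>v\<in>VU. card (inc_edges U ends v))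
      + int (\<Sum>v\<in>VU. card {f\<in>S. v \<in> verts_of ends f})"
    unfolding charge_def by (simp add: sum.distrib sum_subtractf sum_distrib_left of_nat_sum)
  also have "\<dots> = 8 * euler_char VU U S"
    unfolding degrees corners euler_char_def by simp
  also have "\<dots> = 8" using S(3) unfolding VU_def U_def by simp
  finally have "8 = (\<Sum>v\<in>VU. charge v)" by simp
  also have "\<dots> \<le> (\<Sum>v\<in>VU. if v \<in> verts_of ends C then 1 else 0)"
    using disc_vertex_charge_le[OF S(1)] S(2) unfolding charge_def VU_def U_def
    by (intro sum_mono) simp
  also have "\<dots> = int (card {v\<in>VU. v \<in> verts_of ends C})"
    using sum.inter_filter[OF finVU, of "\<lambda>_. 1::int"] by simp
  finally have "8 \<le> card {v\<in>VU. v \<in> verts_of ends C}" by simp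
  also have "\<dots> \<le> card (verts_of ends C)"
    by (rule card_mono) (use C finite_ends in \<open>auto simp: verts_of_def is_cycle_def\<close>)
  also have "\<dots> = card C" using card_verts_of_cycle[OF C(2)] card_ends C(1) by blast
  finally show ?thesis .
qed

lemma card_cycle_ge:
  assumes "long_noncontractible E ends F" "C \<subseteq> E" "is_cycle ends C"
  shows "8 \<le> card C"
proof (cases "contractible ends F C")
  case False
  then have "8 < card C" using assms unfolding long_noncontractible_def by blast
  then show ?thesis by simp
qed (use card_contractible_cycle_ge assms(2,3) in blast)

lemma no_short_cycle:
  assumes long: "long_noncontractible E ends F"
    and xs: "distinct xs" "3 \<le> length xs" "length xs < 8"
    and walk: "list_all2 (adj E ends) xs (rotate1 xs)"
  shows False
proof -
  have "inj_on (nth xs) {..<length xs}"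
    using xs(1) by (simp add: inj_on_def nth_eq_iff_index_eq)
  moreover have "\<forall>i<length xs. adj E ends (xs ! i) (xs ! (Suc i mod length xs))"
    using walk by (simp add: list_all2_conv_all_nth nth_rotate1)
  ultimately obtain C where C: "C \<subseteq> E" "is_cycle ends C" "card C = length xs"
    by (rule cycle_of_cyclic_walk[OF xs(2)])
  have "8 \<le> card C" by (rule card_cycle_ge[OF long C(1,2)])
  then show False using C(3) xs(3) by simp
qed

lemma adj_sym: "adj E ends x y \<Longrightarrow> adj E ends y x"
  unfolding adj_def by (auto simp: insert_commute)

lemma adj_irrefl: "adj E ends x y \<Longrightarrow> x \<noteq> y"
  unfolding adj_def using card_ends by fastforce

lemma adj_in_V: "adj E ends x y \<Longrightarrow> x \<in> V"
  unfolding adj_def using ends_subset by blast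

lemma no_triangle:
  assumes "long_noncontractible E ends F" "distinct [a, b, c]"
    "adj E ends a b" "adj E ends b c" "adj E ends c a"
  shows False
  by (rule no_short_cycle[OF assms(1,2)]) (use assms in simp_all)

lemma card_neighbours:
  assumes v: "v \<in> V" shows "card {y. adj E ends v y} = 3"
proof -
  obtain a b c where abc: "inc_edges E ends v = {a, b, c}" "a \<noteq> b" "b \<noteq> c" "a \<noteq> c"
    using card_edges_at_vertex[OF v] unfolding card_3_iff by metis
  have m: "a \<in> E" "v \<in> ends a" "b \<in> E" "v \<in> ends b" "c \<in> E" "v \<in> ends c"
    using abc(1) unfolding inc_edges_def by blast+
  obtain oa ob oc where o: "ends a = {v, oa}" "ends b = {v, ob}" "ends c = {v, oc}"
    using card_2_other[OF card_ends] m by metis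
  have "{y. adj E ends v y} = {oa, ob, oc}"
  proof (intro equalityI subsetI)
    fix y assume "y \<in> {y. adj E ends v y}"
    then obtain g where g: "g \<in> E" "ends g = {v, y}" unfolding adj_def by blast
    then have "g \<in> {a, b, c}" unfolding abc(1)[symmetric] by (simp add: inc_edges_iff)
    moreover have "y \<noteq> v" using card_ends[OF g(1)] g(2) by (cases "y = v") auto
    ultimately show "y \<in> {oa, ob, oc}" using g(2) o by (auto simp: doubleton_eq_iff)
  qed (use o m in \<open>auto simp: adj_def\<close>)
  moreover have "oa \<noteq> ob" "oa \<noteq> oc" "ob \<noteq> oc"
    using o m abc(2-4) inj_onD[OF inj_on_ends] by metis+
  ultimately show ?thesis by simp
qed

end

section \<open>The super-plaquette algorithm removes nine adjacencies\<close>

lemma Lcount_eq_card_unmatched: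
  assumes inj: "inj_on ends E" and two: "\<And>g. g \<in> E \<Longrightarrow> card (ends g) = 2"
  shows "Lcount (adj E ends) (adj E' ends') = card {g\<in>E. \<forall>x\<in>E'. ends' x \<noteq> ends g}"
proof -
  let ?U = "{g\<in>E. \<forall>x\<in>E'. ends' x \<noteq> ends g}"
  have "{{x, y} | x y. adj E ends x y \<and> \<not> adj E' ends' x y} = ends ` ?U"
  proof (intro equalityI subsetI)
    fix P assume "P \<in> ends ` ?U"
    then obtain g where g: "g \<in> ?U" "P = ends g" by blast
    then obtain x y where "ends g = {x, y}" using two[of g] unfolding card_2_iff by blast
    then show "P \<in> {{x, y} | x y. adj E ends x y \<and> \<not> adj E' ends' x y}"
      using g unfolding adj_def by fastforce
  qed (auto simp: adj_def)
  then show ?thesis unfolding Lcount_def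
    using card_image[OF inj_on_subset[OF inj]] by (metis (no_types, lifting) mem_Collect_eq subsetI)
qed

lemma Inl_mem_sp_faces_iff:
  "(\<exists>f\<in>sp_faces F fc ends u w e. Inl g \<in> f) \<longleftrightarrow>
     (\<exists>f\<in>F - sp_shrink F e - sp_merge F fc e. g \<in> f) \<or> (\<exists>S. (S, g) \<in> sp_new F fc ends u w e)
     \<or> (\<exists>M\<in>sp_merge F fc e. g \<in> M) \<and> (\<forall>S\<in>sp_shrink F e. g \<notin> S)"
  unfolding sp_faces_def bex_Un by auto blast

lemma Inr_mem_sp_faces: "\<exists>f\<in>sp_faces F fc ends u w e. Inr p \<in> f \<Longrightarrow> p \<in> sp_new F fc ends u w e"
  unfolding sp_faces_def by blast

lemma sp_new_mem_sp_faces: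
  "(S, g) \<in> sp_new F fc ends u w e \<Longrightarrow> {Inl g, Inr (S, g)} \<in> sp_faces F fc ends u w e"
  unfolding sp_faces_def by blast

locale super_plaquette = lattice888 +
  fixes u w :: 'v and e :: 'e and S1 S2 :: "'e set"
  assumes edge: "e \<in> E" and ends_edge: "ends e = {u, w}"
    and shrink_faces: "{f\<in>F. e\<in>f} = {S1, S2}"
begin

abbreviation "D \<equiv> edge_col F fc e"

abbreviation "G' \<equiv> sp_edges F fc ends u w e"

lemma shrink_faces_props: "S1 \<in> F" "e \<in> S1" "S2 \<in> F" "e \<in> S2" "S1 \<noteq> S2" "fc S1 \<noteq> fc S2"
    "D \<noteq> fc S1" "D \<noteq> fc S2"
  using Collect_eq_pairD[OF shrink_faces] faces_at_edge_distinct[OF edge shrink_faces]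
    edge_col_faces[OF edge shrink_faces] by auto

lemma sp_shrink_eq: "sp_shrink F e = {S1, S2}"
  unfolding sp_shrink_def using shrink_faces .

lemma sp_merge_iff: "M \<in> sp_merge F fc e \<longleftrightarrow> M \<in> F \<and> fc M = D \<and> (M \<inter> S1 \<noteq> {} \<or> M \<inter> S2 \<noteq> {})"
  unfolding sp_merge_def sp_shrink_eq by auto

lemma sp_new_iff: "(S, g) \<in> sp_new F fc ends u w e \<longleftrightarrow>
    (S = S1 \<or> S = S2) \<and> g \<in> S \<and> edge_col F fc g = D \<and> u \<notin> ends g \<and> w \<notin> ends g"
  unfolding sp_new_def sp_shrink_eq by auto

lemma Inl_mem_sp_edges_iff:
  "Inl g \<in> G' \<longleftrightarrow> (\<exists>f\<in>sp_faces F fc ends u w e. Inl g \<in> f) \<and> u \<notin> ends g \<and> w \<notin> ends g"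
  unfolding sp_edges_def sp_ends_def by auto

lemma Inl_mem_sp_edges_imp_edge:
  assumes "Inl g \<in> G'" shows "g \<in> E"
proof -
  from assms consider f where "f \<in> F" "g \<in> f" | S where "(S, g) \<in> sp_new F fc ends u w e"
    | M where "M \<in> sp_merge F fc e" "g \<in> M"
    unfolding Inl_mem_sp_edges_iff Inl_mem_sp_faces_iff by blast
  then show ?thesis
    by cases (use face_subset shrink_faces_props in \<open>auto simp: sp_new_iff sp_merge_iff\<close>)
qed

lemma sp_edges_ends_old: "x \<in> G' \<Longrightarrow> \<exists>g. Inl g \<in> G' \<and> sp_ends ends x = ends g"
proof (cases x)
  case (Inr p)
  obtain S g where p: "p = (S, g)" by (cases p)
  assume x: "x \<in> G'"
  then have "\<exists>f\<in>sp_faces F fc ends u w e. Inr (S, g) \<in> f" and uw: "u \<notin> ends g" "w \<notin> ends g"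
    using Inr p unfolding sp_edges_def sp_ends_def by auto
  then have "{Inl g, Inr (S, g)} \<in> sp_faces F fc ends u w e"
    by (intro sp_new_mem_sp_faces Inr_mem_sp_faces)
  then have "Inl g \<in> G'" using uw unfolding Inl_mem_sp_edges_iff by blast
  then show ?thesis using Inr p by (auto simp: sp_ends_def)
qed (auto simp: sp_ends_def)

text \<open>An edge of a shrink face whose colour is not \<open>D\<close> has its other face of colour \<open>D\<close>, so that
  face is a merge face; hence the edge lies on no face of the output.\<close>

lemma shrink_face_edge_off_colour_removed:
  assumes g: "g \<in> S" "S \<in> {S1, S2}" and col: "edge_col F fc g \<noteq> D"
  shows "\<not> (\<exists>f\<in>sp_faces F fc ends u w e. Inl g \<in> f)"
proof
  assume "\<exists>f\<in>sp_faces F fc ends u w e. Inl g \<in> f"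
  moreover have "(S', g) \<notin> sp_new F fc ends u w e" for S' using col by (simp add: sp_new_iff)
  moreover have "\<not> (\<forall>S\<in>sp_shrink F e. g \<notin> S)" using g sp_shrink_eq by blast
  ultimately obtain f where f: "f \<in> F" "f \<notin> sp_shrink F e" "f \<notin> sp_merge F fc e" "g \<in> f"
    unfolding Inl_mem_sp_faces_iff by blast
  have SF: "S \<in> F" "D \<noteq> fc S" using g(2) shrink_faces_props by auto
  have gE: "g \<in> E" using face_subset SF(1) g(1) by blast
  have "f \<noteq> S" using f(2) g(2) sp_shrink_eq by auto
  then have "{h\<in>F. g\<in>h} = {S, f}"
    using card_2_eq_pair[OF card_faces_at_edge[OF gE], of S f] SF(1) g(1) f(1,4) by simp
  note cols = edge_col_faces[OF gE this]
  have "fc f = D"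
    by (rule colour_third_unique[of "fc S" "edge_col F fc g"]) (use cols SF(2) col in auto)
  then have "f \<in> sp_merge F fc e" using f(1,4) g sp_merge_iff by auto
  with f(3) show False ..
qed

lemma Inl_mem_sp_edges_iff_kept:
  assumes g: "g \<in> E"
  shows "Inl g \<in> G' \<longleftrightarrow> u \<notin> ends g \<and> w \<notin> ends g \<and> \<not> ((g \<in> S1 \<or> g \<in> S2) \<and> edge_col F fc g \<noteq> D)"
proof (cases "g \<in> S1 \<or> g \<in> S2")
  case True
  then obtain S where S: "S \<in> {S1, S2}" "g \<in> S" by blast
  show ?thesis
  proof (cases "edge_col F fc g = D")
    case True
    show ?thesis
    proof
      assume "u \<notin> ends g \<and> w \<notin> ends g \<and> \<not> ((g \<in> S1 \<or> g \<in> S2) \<and> edge_col F fc g \<noteq> D)"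
      then have "(S, g) \<in> sp_new F fc ends u w e" using S True by (auto simp: sp_new_iff)
      then have "{Inl g, Inr (S, g)} \<in> sp_faces F fc ends u w e" by (rule sp_new_mem_sp_faces)
      then show "Inl g \<in> G'"
        using \<open>u \<notin> ends g \<and> w \<notin> ends g \<and> _\<close> unfolding Inl_mem_sp_edges_iff by blast
    next
      assume "Inl g \<in> G'"
      then have "u \<notin> ends g" "w \<notin> ends g" unfolding Inl_mem_sp_edges_iff by simp_all
      then show "u \<notin> ends g \<and> w \<notin> ends g \<and> \<not> ((g \<in> S1 \<or> g \<in> S2) \<and> edge_col F fc g \<noteq> D)"
        using True by simp
    qed
  next
    case False
    then have "\<not> (\<exists>f\<in>sp_faces F fc ends u w e. Inl g \<in> f)"
      by (rule shrink_face_edge_off_colour_removed[OF S(2,1)])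
    then have "Inl g \<notin> G'" unfolding Inl_mem_sp_edges_iff by simp
    then show ?thesis using S False by auto
  qed
next
  case False
  obtain A B where "A \<noteq> B" "{h\<in>F. g\<in>h} = {A, B}" by (rule faces_at_edge_pair[OF g])
  then have A: "A \<in> F" "g \<in> A" using Collect_eq_pairD by metis+
  have "\<forall>S\<in>sp_shrink F e. g \<notin> S" using False sp_shrink_eq by simp
  then have "A \<in> F - sp_shrink F e - sp_merge F fc e \<or> (A \<in> sp_merge F fc e \<and> (\<forall>S\<in>sp_shrink F e. g \<notin> S))"
    using A by auto
  then have "\<exists>f\<in>sp_faces F fc ends u w e. Inl g \<in> f"
    unfolding Inl_mem_sp_faces_iff using A(2) by blast
  then show ?thesis using False unfolding Inl_mem_sp_edges_iff by simp
qed

lemma unmatched_edges_eq_removed: "{g\<in>E. \<forall>x\<in>G'. sp_ends ends x \<noteq> ends g} = {g\<in>E. Inl g \<notin> G'}"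
proof (intro equalityI subsetI)
  fix g assume g: "g \<in> {g\<in>E. Inl g \<notin> G'}"
  have False if x: "x \<in> G'" "sp_ends ends x = ends g" for x
  proof -
    obtain g' where g': "Inl g' \<in> G'" "ends g = ends g'" using sp_edges_ends_old[OF x(1)] x(2) by auto
    then have "g' = g" using Inl_mem_sp_edges_imp_edge inj_on_ends g by (auto simp: inj_on_eq_iff)
    then show False using g g' by simp
  qed
  then show "g \<in> {g\<in>E. \<forall>x\<in>G'. sp_ends ends x \<noteq> ends g}" using g by blast
qed (force simp: sp_ends_def)

abbreviation "shrink_cut S \<equiv> {g\<in>S. edge_col F fc g \<noteq> D \<and> u \<notin> ends g \<and> w \<notin> ends g}"

lemma removed_edges_eq: "{g\<in>E. Inl g \<notin> G'}
    = (inc_edges E ends u \<union> inc_edges E ends w) \<union> (shrink_cut S1 \<union> shrink_cut S2)"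
proof (rule set_eqI)
  fix g
  have "g \<in> S1 \<Longrightarrow> g \<in> E" "g \<in> S2 \<Longrightarrow> g \<in> E" using face_subset shrink_faces_props by blast+
  then show "g \<in> {g\<in>E. Inl g \<notin> G'}
      \<longleftrightarrow> g \<in> (inc_edges E ends u \<union> inc_edges E ends w) \<union> (shrink_cut S1 \<union> shrink_cut S2)"
    using Inl_mem_sp_edges_iff_kept[of g] unfolding Un_iff mem_Collect_eq inc_edges_iff by blast
qed

theorem Lcount_super_plaquette: "Lcount (adj E ends) (adj G' (sp_ends ends)) = 9"
proof -
  have "shrink_cut S1 \<inter> shrink_cut S2 = {}"
  proof (rule ccontr)
    assume "shrink_cut S1 \<inter> shrink_cut S2 \<noteq> {}"
    then obtain g where g: "g \<in> S1" "g \<in> S2" "edge_col F fc g \<noteq> D" by blast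
    have gE: "g \<in> E" using g face_subset shrink_faces_props by blast
    then have "{h\<in>F. g\<in>h} = {S1, S2}"
      using card_2_eq_pair[OF card_faces_at_edge[OF gE]] g shrink_faces_props by simp
    note cols = edge_col_faces[OF gE this]
    have "edge_col F fc g = D"
      by (rule colour_third_unique[of "fc S1" "fc S2"]) (use cols shrink_faces_props in auto)
    with g(3) show False ..
  qed
  moreover have "card (shrink_cut S1) = 2" "card (shrink_cut S2) = 2"
    using card_face_edges_off_edge[OF edge ends_edge] shrink_faces_props by simp_all
  moreover have "(inc_edges E ends u \<union> inc_edges E ends w) \<inter> (shrink_cut S1 \<union> shrink_cut S2) = {}"
    by (auto simp: inc_edges_iff)
  ultimately have "card {g\<in>E. Inl g \<notin> G'} = 5 + (2 + 2)"
    unfolding removed_edges_eq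
    using card_edges_at_edge[OF edge ends_edge] finite_inc_edges finite_face shrink_faces_props
    by (simp add: card_Un_disjoint)
  then show ?thesis
    using Lcount_eq_card_unmatched[OF inj_on_ends card_ends, of G' "sp_ends ends"]
      unmatched_edges_eq_removed by simp
qed

end

section \<open>Every competing lattice removes at least nine\<close>

locale competitor = lattice888 +
  fixes u w' :: 'v and VH :: "'v set" and EH :: "'f set" and endsH :: "'f \<Rightarrow> 'v set"
  assumes long: "long_noncontractible E ends F"
    and removed_adj: "adj E ends u w'"
    and finite_EH: "finite EH"
    and endsH: "g \<in> EH \<Longrightarrow> endsH g \<subseteq> VH \<and> card (endsH g) = 2"
    and trivalent_H: "trivalent VH EH endsH"
    and VH_eq: "VH = V - {u, w'}"
    and edges_H: "g \<in> EH \<Longrightarrow> \<exists>x y. endsH g = {x, y} \<and> adj E ends x y"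
begin

definition double_edge :: "'v \<Rightarrow> 'v \<Rightarrow> bool" where
  "double_edge z p \<longleftrightarrow>
    (\<exists>g1 g2. g1 \<in> EH \<and> g2 \<in> EH \<and> g1 \<noteq> g2 \<and> endsH g1 = {z, p} \<and> endsH g2 = {z, p})"

definition boundary :: "'v set" where
  "boundary = {z\<in>VH. adj E ends z u \<or> adj E ends z w'}"

lemma boundaryE:
  assumes "z \<in> boundary" obtains a where "z \<in> VH" "a \<in> {u, w'}" "adj E ends z a"
  using assms that unfolding boundary_def by blast

lemma card_inc_edges_H: "z \<in> VH \<Longrightarrow> card (inc_edges EH endsH z) = 3"
  using trivalent_H unfolding trivalent_def by blast

lemma edge_H_other_end:
  assumes g: "g \<in> EH" "z \<in> endsH g"
  obtains y where "y \<noteq> z" "endsH g = {z, y}" "y \<in> VH" "adj E ends z y"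
proof -
  obtain y where y: "y \<noteq> z" "endsH g = {z, y}" using card_2_other[of "endsH g" z] endsH g by metis
  obtain a b where "endsH g = {a, b}" "adj E ends a b" using edges_H[OF g(1)] by blast
  then have "adj E ends z y" using y adj_sym by (auto simp: doubleton_eq_iff)
  moreover have "y \<in> VH" using endsH[OF g(1)] y by auto
  ultimately show thesis using y that by blast
qed

lemma adj_H_in_VH: "adj EH endsH x y \<Longrightarrow> x \<in> VH"
  unfolding adj_def using endsH by blast

lemma double_edge_props: "double_edge z p \<Longrightarrow> p \<in> VH \<and> p \<noteq> z \<and> adj E ends z p"
  unfolding double_edge_def by (metis edge_H_other_end doubleton_eq_iff insertI1)

text \<open>A neighbour \<open>z\<close> of a removed vertex keeps at most two neighbours in \<open>VH\<close>, but all three of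
  its edges in \<open>H\<close> go to neighbours in \<open>G\<close>: two of them are parallel.\<close>

lemma double_edge_at_boundary:
  assumes "z \<in> boundary"
  obtains p where "double_edge z p"
proof -
  obtain a where z: "z \<in> VH" and a: "a \<in> {u, w'}" "adj E ends z a" by (rule boundaryE[OF assms])
  obtain h1 h2 h3 where I: "inc_edges EH endsH z = {h1, h2, h3}" "h1 \<noteq> h2" "h2 \<noteq> h3" "h1 \<noteq> h3"
    using card_inc_edges_H[OF z] unfolding card_3_iff by metis
  have hm: "h1 \<in> EH" "z \<in> endsH h1" "h2 \<in> EH" "z \<in> endsH h2" "h3 \<in> EH" "z \<in> endsH h3"
    using I(1) unfolding inc_edges_def by blast+
  obtain o1 where o1: "endsH h1 = {z, o1}" "o1 \<in> VH" "adj E ends z o1"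
    using edge_H_other_end[OF hm(1,2)] by blast
  obtain o2 where o2: "endsH h2 = {z, o2}" "o2 \<in> VH" "adj E ends z o2"
    using edge_H_other_end[OF hm(3,4)] by blast
  obtain o3 where o3: "endsH h3 = {z, o3}" "o3 \<in> VH" "adj E ends z o3"
    using edge_H_other_end[OF hm(5,6)] by blast
  have "card {y. adj E ends z y} = 3" using card_neighbours z VH_eq by simp
  then have fin: "finite {y. adj E ends z y}" by (metis card.infinite zero_neq_numeral)
  have "{o1, o2, o3} \<subseteq> {y. adj E ends z y} - {a}" using o1 o2 o3 a(1) VH_eq by auto
  then have "card {o1, o2, o3} \<le> 2"
    using card_mono[of "{y. adj E ends z y} - {a}"] fin a(2) \<open>card _ = 3\<close> by simp
  then have "o1 = o2 \<or> o1 = o3 \<or> o2 = o3" by (auto simp: card_insert_if split: if_splits)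
  then show thesis
    using that hm I(2-4) o1(1) o2(1) o3(1) unfolding double_edge_def by metis
qed

text \<open>At the far end \<open>p\<close> of a doubled edge, \<open>H\<close> offers only two neighbours for the three of
  \<open>G\<close>.\<close>

lemma lost_pair_at_double_edge:
  assumes "double_edge z p"
  obtains q where "adj E ends p q" "\<not> adj EH endsH p q"
proof -
  obtain g1 g2 where g: "g1 \<in> EH" "g2 \<in> EH" "g1 \<noteq> g2" "endsH g1 = {z, p}" "endsH g2 = {z, p}"
    using assms unfolding double_edge_def by blast
  have p: "p \<in> VH" "p \<noteq> z" using double_edge_props[OF assms] by simp_all
  have "g1 \<in> inc_edges EH endsH p" "g2 \<in> inc_edges EH endsH p" using g by (auto simp: inc_edges_def)
  then obtain g3 where g3: "inc_edges EH endsH p = {g1, g2, g3}"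
    using card_3_other[OF card_inc_edges_H[OF p(1)] _ _ g(3)] by metis
  then have "g3 \<in> EH" "p \<in> endsH g3" unfolding inc_edges_def by blast+
  then obtain y where y: "endsH g3 = {p, y}" by (rule edge_H_other_end)
  have H_nbrs: "{y'. adj EH endsH p y'} \<subseteq> {z, y}"
  proof
    fix y' assume "y' \<in> {y'. adj EH endsH p y'}"
    then obtain g where "g \<in> EH" "endsH g = {p, y'}" unfolding adj_def by blast
    moreover from this have "g \<in> {g1, g2, g3}" unfolding g3[symmetric] by (simp add: inc_edges_def)
    moreover have "y' \<noteq> p" using endsH[of g] calculation(1,2) by (cases "y' = p") auto
    ultimately show "y' \<in> {z, y}" using g(4,5) y by (auto simp: doubleton_eq_iff)
  qed
  have "card {y'. adj E ends p y'} = 3" using card_neighbours p VH_eq by simp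
  moreover have "card {z, y} \<le> 2" by (simp add: card_insert_if)
  ultimately have "\<not> {y'. adj E ends p y'} \<subseteq> {z, y}"
    using card_mono[of "{z, y}" "{y'. adj E ends p y'}"] by auto
  then show thesis using that H_nbrs by blast
qed

lemma removed_vertices_ne: "u \<noteq> w'"
  using adj_irrefl[OF removed_adj] .

lemma double_edge_far_from_removed:
  assumes "z \<in> boundary" and p: "double_edge z p" and b: "b \<in> {u, w'}"
  shows "\<not> adj E ends p b"
proof
  assume pb: "adj E ends p b"
  obtain a where z: "z \<in> VH" and a: "a \<in> {u, w'}" "adj E ends z a" by (rule boundaryE[OF assms(1)])
  have "p \<in> VH" "p \<noteq> z" "adj E ends z p" using double_edge_props[OF p] by simp_all
  moreover have "a \<notin> VH" "b \<notin> VH" using a b VH_eq by auto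
  moreover have "a \<noteq> b \<Longrightarrow> adj E ends b a" using a b removed_adj adj_sym by auto
  ultimately show False
    using no_triangle[OF long, of z p a] no_short_cycle[OF long, of "[z, p, b, a]"] z a pb adj_sym
    by (cases "a = b") auto
qed

lemma double_edges_lost_pairs_distinct:
  assumes zz': "z \<in> boundary" "z' \<in> boundary" "z \<noteq> z'"
    and p: "double_edge z p" "adj E ends p q" and p': "double_edge z' p'" "adj E ends p' q'"
  shows "{p, q} \<noteq> {p', q'}"
proof
  assume eq: "{p, q} = {p', q'}"
  obtain a where z: "z \<in> VH" and a: "a \<in> {u, w'}" "adj E ends z a" by (rule boundaryE[OF zz'(1)])
  obtain a' where z': "z' \<in> VH" and a': "a' \<in> {u, w'}" "adj E ends z' a'" by (rule boundaryE[OF zz'(2)])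
  show False
  proof (cases "p = p'")
    case True
    \<comment> \<open>then \<open>p\<close> would carry four edges of \<open>H\<close>\<close>
    obtain g1 g2 where "g1 \<in> EH" "g2 \<in> EH" "g1 \<noteq> g2" "endsH g1 = {z, p}" "endsH g2 = {z, p}"
      using p(1) unfolding double_edge_def by blast
    moreover obtain g1' g2' where
      "g1' \<in> EH" "g2' \<in> EH" "g1' \<noteq> g2'" "endsH g1' = {z', p}" "endsH g2' = {z', p}"
      using p'(1) True unfolding double_edge_def by blast
    moreover have "{z, p} \<noteq> {z', p}"
      using zz'(3) double_edge_props[OF p(1)] by (auto simp: doubleton_eq_iff)
    ultimately have "distinct [g1, g2, g1', g2']" "{g1, g2, g1', g2'} \<subseteq> inc_edges EH endsH p"
      by (auto simp: inc_edges_def)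
    then have "4 \<le> card (inc_edges EH endsH p)"
      using card_mono[of "inc_edges EH endsH p" "{g1, g2, g1', g2'}"] finite_EH
        distinct_card[of "[g1, g2, g1', g2']"]
      by (simp add: inc_edges_def)
    then show False using card_inc_edges_H double_edge_props[OF p(1)] by simp
  next
    case False
    \<comment> \<open>then the edge \<open>p p'\<close> closes a cycle through \<open>z\<close>, \<open>z'\<close> and the removed vertices\<close>
    then have "q' = p" "q = p'" using eq by (auto simp: doubleton_eq_iff)
    note pp = double_edge_props[OF p(1)] double_edge_props[OF p'(1)]
    have far: "\<not> adj E ends p b" "\<not> adj E ends p' b" if "b \<in> {u, w'}" for b
      using double_edge_far_from_removed zz'(1,2) p(1) p'(1) that by blast+
    have "a \<notin> VH" "a' \<notin> VH" using a(1) a'(1) VH_eq by auto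
    moreover have "z \<noteq> p'" "z' \<noteq> p" using far a a' by auto
    moreover have "adj E ends p p'" using p'(2) \<open>q' = p\<close> adj_sym by simp
    moreover have "a \<noteq> a' \<Longrightarrow> adj E ends a' a" using a(1) a'(1) removed_adj adj_sym by auto
    ultimately show False
      using no_short_cycle[OF long, of "[z, p, p', z', a]"]
        no_short_cycle[OF long, of "[z, p, p', z', a', a]"]
        z z' zz'(3) pp False a a' adj_sym by (cases "a = a'") auto
  qed
qed

lemma card_boundary: "card boundary = 4"
proof -
  let ?Nu = "{y. adj E ends u y} - {w'}" and ?Nw = "{y. adj E ends w' y} - {u}"
  have "u \<in> V" "w' \<in> V" using adj_in_V removed_adj adj_sym by blast+
  then have card3: "card {y. adj E ends u y} = 3" "card {y. adj E ends w' y} = 3"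
    using card_neighbours by simp_all
  then have fin: "finite {y. adj E ends u y}" "finite {y. adj E ends w' y}"
    by (metis card.infinite zero_neq_numeral)+
  then have "card ?Nu = 2" "card ?Nw = 2" using card3 removed_adj adj_sym by simp_all
  moreover have "?Nu \<inter> ?Nw = {}"
  proof (rule ccontr)
    assume "?Nu \<inter> ?Nw \<noteq> {}"
    then obtain y where y: "adj E ends u y" "adj E ends w' y" "y \<noteq> w'" by blast
    show False
      by (rule no_triangle[OF long, of u y w'])
        (use y removed_adj removed_vertices_ne adj_irrefl[OF y(1)] adj_sym in auto)
  qed
  moreover have "boundary = ?Nu \<union> ?Nw"
    unfolding boundary_def by (auto simp: VH_eq dest: adj_in_V adj_irrefl adj_sym)
  ultimately show ?thesis using fin by (simp add: card_Un_disjoint)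
qed

abbreviation "lost_pairs \<equiv> {{x, y} | x y. adj E ends x y \<and> \<not> adj EH endsH x y}"

lemma removed_edge_pairs_lost:
  "ends ` (inc_edges E ends u \<union> inc_edges E ends w') \<subseteq> lost_pairs"
  "card (ends ` (inc_edges E ends u \<union> inc_edges E ends w')) = 5"
proof -
  show "ends ` (inc_edges E ends u \<union> inc_edges E ends w') \<subseteq> lost_pairs"
  proof (rule image_subsetI)
    fix g assume "g \<in> inc_edges E ends u \<union> inc_edges E ends w'"
    then obtain x where x: "x \<in> {u, w'}" "x \<in> ends g" "g \<in> E" unfolding inc_edges_def by blast
    then obtain y where y: "ends g = {x, y}" using card_2_other[OF card_ends] by metis
    have "adj E ends x y" using x(3) y unfolding adj_def by blast
    moreover have "\<not> adj EH endsH x y" using adj_H_in_VH VH_eq x(1) by blast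
    ultimately show "ends g \<in> lost_pairs" using y by blast
  qed
  obtain e' where e': "e' \<in> E" "ends e' = {u, w'}" using removed_adj unfolding adj_def by blast
  have "inc_edges E ends u \<union> inc_edges E ends w' \<subseteq> E" unfolding inc_edges_def by blast
  then show "card (ends ` (inc_edges E ends u \<union> inc_edges E ends w')) = 5"
    using card_image[OF inj_on_subset[OF inj_on_ends]] card_edges_at_edge[OF e'] by metis
qed

lemma lost_pairs_at_boundary:
  obtains P where "inj_on P boundary" "P ` boundary \<subseteq> lost_pairs"
    "\<And>z. z \<in> boundary \<Longrightarrow> u \<notin> P z \<and> w' \<notin> P z"
proof -
  have ex_pair: "\<forall>z\<in>boundary. \<exists>P p q. P = {p, q} \<and> double_edge z p \<and> adj E ends p q \<and> \<not> adj EH endsH p q"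
  proof
    fix z assume "z \<in> boundary"
    then obtain p where "double_edge z p" by (rule double_edge_at_boundary)
    moreover obtain q where "adj E ends p q" "\<not> adj EH endsH p q"
      by (rule lost_pair_at_double_edge[OF calculation])
    ultimately show "\<exists>P p q. P = {p, q} \<and> double_edge z p \<and> adj E ends p q \<and> \<not> adj EH endsH p q"
      by blast
  qed
  obtain P where P: "\<And>z. z \<in> boundary \<Longrightarrow>
      \<exists>p q. P z = {p, q} \<and> double_edge z p \<and> adj E ends p q \<and> \<not> adj EH endsH p q"
    using bchoice[OF ex_pair] by blast
  have "inj_on P boundary"
  proof (rule inj_onI, rule ccontr)
    fix z z' assume zz: "z \<in> boundary" "z' \<in> boundary" "P z = P z'" "z \<noteq> z'"
    obtain p q p' q' where "P z = {p, q}" "double_edge z p" "adj E ends p q"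
      "P z' = {p', q'}" "double_edge z' p'" "adj E ends p' q'" using P zz(1,2) by metis
    then show False using double_edges_lost_pairs_distinct[OF zz(1,2,4)] zz(3) by metis
  qed
  moreover have "P ` boundary \<subseteq> lost_pairs" using P by blast
  moreover have "u \<notin> P z \<and> w' \<notin> P z" if z: "z \<in> boundary" for z
  proof -
    obtain p q where pq: "P z = {p, q}" "double_edge z p" "adj E ends p q" using P[OF z] by blast
    have "q \<notin> {u, w'}" using double_edge_far_from_removed[OF z pq(2)] pq(3) by blast
    moreover have "p \<notin> {u, w'}" using double_edge_props[OF pq(2)] VH_eq by blast
    ultimately show ?thesis using pq(1) by auto
  qed
  ultimately show thesis by (rule that)
qed

theorem Lcount_competitor_ge: "9 \<le> Lcount (adj E ends) (adj EH endsH)"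
proof -
  let ?R = "ends ` (inc_edges E ends u \<union> inc_edges E ends w')"
  obtain P where P: "inj_on P boundary" "P ` boundary \<subseteq> lost_pairs"
    "\<And>z. z \<in> boundary \<Longrightarrow> u \<notin> P z \<and> w' \<notin> P z"
    using lost_pairs_at_boundary by blast
  have "?R \<inter> P ` boundary = {}" using P(3) unfolding inc_edges_def by blast
  moreover have "card (P ` boundary) = 4" using P(1) card_boundary by (simp add: card_image)
  ultimately have nine: "card (?R \<union> P ` boundary) = 9"
    using card_Un_disjoint[of ?R "P ` boundary"] removed_edge_pairs_lost(2)
      finite_inc_edges card_gt_0_iff[of "P ` boundary"] by simp
  have "finite lost_pairs"
    by (rule finite_subset[of _ "ends ` E"]) (use finite_E in \<open>auto simp: adj_def\<close>)
  moreover have "?R \<union> P ` boundary \<subseteq> lost_pairs" using removed_edge_pairs_lost(1) P(2) by simp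
  ultimately have "card (?R \<union> P ` boundary) \<le> card lost_pairs" by (rule card_mono)
  then show ?thesis unfolding Lcount_def nine .
qed

end

theorem mainTheorem3:
  fixes V :: "'v set" and E :: "'e set" and ends :: "'e \<Rightarrow> 'v set"
    and F :: "'e set set" and fc :: "'e set \<Rightarrow> colour"
    and u w :: 'v and e :: 'e
  assumes G: "lattice_888 V E ends F fc"
    and long: "long_noncontractible E ends F"
    and u: "u \<in> V" and e: "e \<in> E" and ends_e: "ends e = {u, w}"
  shows "Lcount (adj E ends) (adj (sp_edges F fc ends u w e) (sp_ends ends)) = 9
    \<and> (\<forall>(VH :: 'v set) (EH :: 'f set) (endsH :: 'f \<Rightarrow> 'v set) (FH :: 'f set set) w'.
          cellular_map VH EH endsH FH \<and> trivalent VH EH endsH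
          \<and> (\<exists>fcH :: 'f set \<Rightarrow> colour. proper_face_col FH fcH)
          \<and> euler_char VH EH FH = euler_char V E F
          \<and> (orientable endsH FH \<longleftrightarrow> orientable ends F)
          \<and> adj E ends u w' \<and> VH = V - {u, w'}
          \<and> (\<forall>g\<in>EH. \<exists>x y. endsH g = {x, y} \<and> adj E ends x y)
          \<longrightarrow> Lcount (adj E ends) (adj (sp_edges F fc ends u w e) (sp_ends ends))
              \<le> Lcount (adj E ends) (adj EH endsH))"
proof -
  \<comment> \<open>\<open>u \<in> V\<close> follows from \<open>e \<in> E\<close>.\<close>
  interpret lattice888 V E ends F fc by (rule lattice888.intro[OF G])
  obtain S1 S2 where "S1 \<noteq> S2" "{f\<in>F. e\<in>f} = {S1, S2}" by (rule faces_at_edge_pair[OF e])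
  then interpret super_plaquette V E ends F fc u w e S1 S2
    by unfold_locales (use e ends_e in simp_all)
  have nine: "Lcount (adj E ends) (adj (sp_edges F fc ends u w e) (sp_ends ends)) = 9"
    by (rule Lcount_super_plaquette)
  show ?thesis
  proof (intro conjI allI impI)
    fix VH :: "'v set" and EH :: "'f set" and endsH :: "'f \<Rightarrow> 'v set" and FH :: "'f set set" and w'
    assume H: "cellular_map VH EH endsH FH \<and> trivalent VH EH endsH
          \<and> (\<exists>fcH :: 'f set \<Rightarrow> colour. proper_face_col FH fcH)
          \<and> euler_char VH EH FH = euler_char V E F
          \<and> (orientable endsH FH \<longleftrightarrow> orientable ends F)
          \<and> adj E ends u w' \<and> VH = V - {u, w'}
          \<and> (\<forall>g\<in>EH. \<exists>x y. endsH g = {x, y} \<and> adj E ends x y)"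
    interpret competitor V E ends F fc u w' VH EH endsH
      by unfold_locales (use H long in \<open>auto simp: cellular_map_def\<close>)
    show "Lcount (adj E ends) (adj (sp_edges F fc ends u w e) (sp_ends ends))
        \<le> Lcount (adj E ends) (adj EH endsH)"
      using nine Lcount_competitor_ge by simp
  qed (rule nine)
qed

end
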